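(* Let $\theta\in\mathbb{R}$, $k>0$, $\sigma\ge0$, and consider on $\mathbb{R}^2$ $$\dot\xi=-\big(z+k+\sigma(\theta+z)^2\big)\xi,\qquad \dot z=\xi^2,$$ with output $y=\xi$. Then the system is forward complete, Lagrange and Lyapunov stable (with respect to the full state), every point $(0,z)$ is an equilibrium, and the system is GAOS with respect to the output $\xi$. However, when $\sigma=0$ the system is not UGAOS: there is no $T>0$ such that $|\xi(t)|\le 1/2$ for all $t\ge T$ and all initial conditions with $|(\xi_0,z_0)|\le\sqrt{1+(k+1)^2}$. *)

theory Defs
  imports "HOL-Analysis.Analysis"
begin

definition is_sol :: "real \<Rightarrow> real \<Rightarrow> real \<Rightarrow> (real \<Rightarrow> real) \<Rightarrow> (real \<Rightarrow> real) \<Rightarrow> bool" where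
  "is_sol \<theta> k \<sigma> \<xi> z \<longleftrightarrow>
     (\<forall>t\<ge>0. (\<xi> has_real_derivative (- (z t + k + \<sigma> * (\<theta> + z t)^2) * \<xi> t)) (at t within {0..})
           \<and> (z has_real_derivative (\<xi> t)^2) (at t within {0..}))"

definition forward_complete :: "real \<Rightarrow> real \<Rightarrow> real \<Rightarrow> bool" where
  "forward_complete \<theta> k \<sigma> \<longleftrightarrow>
     (\<forall>\<xi>0 z0. \<exists>\<xi> z. is_sol \<theta> k \<sigma> \<xi> z \<and> \<xi> 0 = \<xi>0 \<and> z 0 = z0)"

definition lagrange_stable :: "real \<Rightarrow> real \<Rightarrow> real \<Rightarrow> bool" where
  "lagrange_stable \<theta> k \<sigma> \<longleftrightarrow>
     (\<forall>r\<ge>0. \<exists>R. \<forall>\<xi> z. is_sol \<theta> k \<sigma> \<xi> z \<longrightarrow> norm (\<xi> 0, z 0) \<le> r \<longrightarrow>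
        (\<forall>t\<ge>0. norm (\<xi> t, z t) \<le> R))"

definition lyapunov_stable :: "real \<Rightarrow> real \<Rightarrow> real \<Rightarrow> bool" where
  "lyapunov_stable \<theta> k \<sigma> \<longleftrightarrow>
     (\<forall>\<epsilon>>0. \<exists>\<delta>>0. \<forall>\<xi> z. is_sol \<theta> k \<sigma> \<xi> z \<longrightarrow> norm (\<xi> 0, z 0) \<le> \<delta> \<longrightarrow>
        (\<forall>t\<ge>0. norm (\<xi> t, z t) \<le> \<epsilon>))"

definition is_equilibrium :: "real \<Rightarrow> real \<Rightarrow> real \<Rightarrow> real \<times> real \<Rightarrow> bool" where
  "is_equilibrium \<theta> k \<sigma> p \<longleftrightarrow> is_sol \<theta> k \<sigma> (\<lambda>_. fst p) (\<lambda>_. snd p)"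

definition GAOS :: "real \<Rightarrow> real \<Rightarrow> real \<Rightarrow> bool" where
  "GAOS \<theta> k \<sigma> \<longleftrightarrow>
     (\<forall>\<epsilon>>0. \<exists>\<delta>>0. \<forall>\<xi> z. is_sol \<theta> k \<sigma> \<xi> z \<longrightarrow> norm (\<xi> 0, z 0) \<le> \<delta> \<longrightarrow>
        (\<forall>t\<ge>0. \<bar>\<xi> t\<bar> \<le> \<epsilon>)) \<and>
     (\<forall>r\<ge>0. \<exists>R. \<forall>\<xi> z. is_sol \<theta> k \<sigma> \<xi> z \<longrightarrow> norm (\<xi> 0, z 0) \<le> r \<longrightarrow>
        (\<forall>t\<ge>0. \<bar>\<xi> t\<bar> \<le> R)) \<and>
     (\<forall>\<xi> z. is_sol \<theta> k \<sigma> \<xi> z \<longrightarrow> (\<xi> \<longlongrightarrow> 0) at_top)"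

end

theory Submission
  imports Defs
begin

text \<open>Along solutions \<open>z\<close> is nondecreasing and the energy \<open>\<xi>\<^sup>2 + (z + k)\<^sup>2\<close> is nonincreasing (its
  derivative is \<open>-2 \<sigma> (\<theta> + z)\<^sup>2 \<xi>\<^sup>2\<close>); this gives Lagrange and Lyapunov stability. Both quantities
  are monotone and bounded, so \<open>\<xi>\<^sup>2\<close> converges, and the limit is \<open>0\<close> because \<open>z' = \<xi>\<^sup>2\<close> while \<open>z\<close>
  stays bounded. Solutions exist for all time since \<open>\<xi>\<^sup>2 + (z + k)\<^sup>2 + 2\<sigma>/3 (\<theta> + z)\<^sup>3\<close> is a first
  integral: \<open>z\<close> then solves a scalar equation \<open>z' = G z\<close> whose right-hand side vanishes only
  linearly at its first zero above \<open>z 0\<close>, which is therefore never reached. For \<open>\<sigma> = 0\<close> the pulses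
  \<open>\<xi> = sech (t - T)\<close>, \<open>z = tanh (t - T) - k\<close> start in a fixed ball for every \<open>T\<close> but have
  \<open>\<xi> T = 1\<close>, so the convergence is not uniform.\<close>

lemma nondecreasing_if_deriv_nonneg_within_atLeast:
  fixes f f' :: "real \<Rightarrow> real"
  assumes der: "\<And>t. a \<le> t \<Longrightarrow> (f has_real_derivative f' t) (at t within {a..})"
    and nonneg: "\<And>t. s < t \<Longrightarrow> t < u \<Longrightarrow> f' t \<ge> 0"
    and "a \<le> s" "s \<le> u"
  shows "f s \<le> f u"
proof (rule DERIV_nonneg_imp_increasing_open[OF \<open>s \<le> u\<close>])
  fix t assume t: "s < t" "t < u"
  have "at t within {a..} = at t"
    using t \<open>a \<le> s\<close> by (intro at_within_interior) simp
  then show "\<exists>y. (f has_real_derivative y) (at t) \<and> y \<ge> 0"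
    using der[of t] nonneg[OF t] t \<open>a \<le> s\<close> by auto
next
  have "continuous_on {a..} f" by (rule DERIV_continuous_on) (use der in auto)
  then show "continuous_on {s..u} f" by (rule continuous_on_subset) (use \<open>a \<le> s\<close> in auto)
qed

lemma convergent_at_top_if_mono_bounded:
  fixes f :: "real \<Rightarrow> real"
  assumes mono: "\<And>s t. a \<le> s \<Longrightarrow> s \<le> t \<Longrightarrow> f s \<le> f t"
    and bounded: "\<And>t. a \<le> t \<Longrightarrow> f t \<le> B"
  shows "\<exists>l. (f \<longlongrightarrow> l) at_top"
proof -
  define l where "l = (SUP t\<in>{a..}. f t)"
  have bdd: "bdd_above (f ` {a..})" using bounded by (auto intro!: bdd_aboveI2)
  have "(f \<longlongrightarrow> l) at_top"
  proof (rule order_tendstoI)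
    fix y assume "y < l"
    then obtain t0 where "t0 \<ge> a" "y < f t0"
      unfolding l_def using less_cSUP_iff[OF _ bdd] by auto
    then show "\<forall>\<^sub>F t in at_top. y < f t"
      unfolding eventually_at_top_linorder using mono by (meson less_le_trans)
  next
    fix y assume "l < y"
    have "f t \<le> l" if "a \<le> t" for t unfolding l_def by (rule cSUP_upper) (use that bdd in auto)
    then show "\<forall>\<^sub>F t in at_top. f t < y"
      unfolding eventually_at_top_linorder using \<open>l < y\<close> by (meson le_less_trans)
  qed
  then show ?thesis by blast
qed

lemma first_nonpositive_point:
  fixes G :: "real \<Rightarrow> real"
  assumes cont: "continuous_on {x0..x1} G" and "G x0 > 0" "G x1 \<le> 0" "x0 \<le> x1"
  obtains b where "x0 < b" "b \<le> x1" "G b \<le> 0" "\<And>z. x0 \<le> z \<Longrightarrow> z < b \<Longrightarrow> G z > 0"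
proof -
  define S where "S = {z \<in> {x0..x1}. G z \<le> 0}"
  have "x1 \<in> S" using assms unfolding S_def by auto
  moreover have bdd: "bdd_below S" unfolding S_def by (auto intro: bdd_belowI[of _ x0])
  moreover have "closed S"
    unfolding S_def by (intro continuous_on_closed_Collect_le cont continuous_intros)
  ultimately have inf: "Inf S \<in> S" using closed_contains_Inf by blast
  show thesis
  proof (rule that)
    show "x0 < Inf S" "Inf S \<le> x1" "G (Inf S) \<le> 0"
      using inf \<open>G x0 > 0\<close> unfolding S_def by (auto simp: order.order_iff_strict)
    show "G z > 0" if "x0 \<le> z" "z < Inf S" for z
      using that cInf_lower[OF _ bdd, of z] \<open>Inf S \<le> x1\<close> unfolding S_def by force
  qed
qed

lemma positive_on_left_neighbourhood:
  fixes G :: "real \<Rightarrow> real"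
  assumes "isCont G x" "G x > 0"
  obtains a where "a < x" "\<And>z. a \<le> z \<Longrightarrow> z \<le> x \<Longrightarrow> G z > 0"
proof -
  obtain d where "d > 0" and d: "\<And>z. norm (z - x) < d \<Longrightarrow> \<bar>G z - G x\<bar> < G x"
    using assms unfolding continuous_at_real_range by blast
  show thesis
  proof (rule that[of "x - d/2"])
    fix z assume "x - d/2 \<le> z" "z \<le> x"
    then show "G z > 0" using d[of z] \<open>d > 0\<close> by auto
  qed (use \<open>d > 0\<close> in auto)
qed

lemma lipschitz_if_continuous_derivative:
  fixes G G' :: "real \<Rightarrow> real"
  assumes der: "\<And>z. c \<le> z \<Longrightarrow> z \<le> d \<Longrightarrow> (G has_real_derivative G' z) (at z)"
    and cont: "continuous_on {c..d} G'"
  obtains B where "\<And>x y. x \<in> {c..d} \<Longrightarrow> y \<in> {c..d} \<Longrightarrow> \<bar>G x - G y\<bar> \<le> B * \<bar>x - y\<bar>"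
proof -
  obtain B where B: "\<And>z. z \<in> {c..d} \<Longrightarrow> norm (G' z) \<le> B"
    using compact_imp_bounded[OF compact_continuous_image[OF cont]]
    unfolding bounded_iff by blast
  show thesis
  proof (rule that)
    fix x y assume "x \<in> {c..d}" "y \<in> {c..d}"
    then show "\<bar>G x - G y\<bar> \<le> B * \<bar>x - y\<bar>"
      using field_differentiable_bound[of "{c..d}" G G' B x y] der B
      by (auto intro: has_field_derivative_at_within)
  qed
qed

lemma tendsto_derivative_nonpos_if_bounded_above:
  fixes f f' :: "real \<Rightarrow> real"
  assumes der: "\<And>t. a \<le> t \<Longrightarrow> (f has_real_derivative f' t) (at t within {a..})"
    and bounded: "\<And>t. a \<le> t \<Longrightarrow> f t \<le> B"
    and lim: "(f' \<longlongrightarrow> L) at_top"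
  shows "L \<le> 0"
proof (rule ccontr)
  assume "\<not> L \<le> 0"
  then have "L > 0" by simp
  then have "\<forall>\<^sub>F t in at_top. L / 2 < f' t" by (intro order_tendstoD(1)[OF lim]) simp
  then obtain N where N: "\<And>t. t \<ge> N \<Longrightarrow> L / 2 < f' t"
    unfolding eventually_at_top_linorder by blast
  define t0 where "t0 = max N a"
  define T where "T = t0 + 2 * (B - f t0 + 1) / L"
  have "f t0 \<le> B" using bounded by (simp add: t0_def)
  then have "t0 \<le> T" unfolding T_def using \<open>L > 0\<close> by simp
  have "f t0 - L / 2 * t0 \<le> f T - L / 2 * T"
  proof (rule nondecreasing_if_deriv_nonneg_within_atLeast[where a = a and f = "\<lambda>t. f t - L / 2 * t"])
    show "((\<lambda>t. f t - L / 2 * t) has_real_derivative f' t - L / 2) (at t within {a..})"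
      if "a \<le> t" for t
      using der[OF that] by (auto intro!: derivative_eq_intros)
    show "f' t - L / 2 \<ge> 0" if "t0 < t" "t < T" for t
      using N[of t] that by (simp add: t0_def)
  qed (use \<open>t0 \<le> T\<close> in \<open>auto simp: t0_def\<close>)
  moreover have "L / 2 * T - L / 2 * t0 = B - f t0 + 1" unfolding T_def using \<open>L > 0\<close> by (simp add: field_simps)
  moreover have "f T \<le> B" using bounded \<open>t0 \<le> T\<close> by (simp add: t0_def)
  ultimately show False by linarith
qed

lemma norm_Pair_shift_snd: "norm (x :: real, y + c) \<le> norm (x, y) + \<bar>c\<bar>"
  using norm_triangle_ineq[of "(x, y)" "(0, c)"] by simp

section \<open>Scalar autonomous equations approaching a barrier\<close>

locale scalar_ode_below_barrier =
  fixes G :: "real \<Rightarrow> real" and a z0 b L :: real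
  assumes a_less: "a < z0" and less_b: "z0 < b"
    and cont: "continuous_on {a..<b} G"
    and pos: "\<And>z. a \<le> z \<Longrightarrow> z < b \<Longrightarrow> G z > 0"
    and linear_near_b: "\<And>z. z0 \<le> z \<Longrightarrow> z < b \<Longrightarrow> G z \<le> L * (b - z)"
begin

text \<open>Measured from \<open>a\<close> rather than \<open>z0\<close>, so that it is not truncated to \<open>0\<close> for \<open>z < z0\<close>.\<close>
definition hitting_time :: "real \<Rightarrow> real" where
  "hitting_time z = integral {a..z} (\<lambda>w. 1 / G w) - integral {a..z0} (\<lambda>w. 1 / G w)"

lemma L_pos: "L > 0"
proof -
  have "0 < L * (b - z0)" using pos[of z0] linear_near_b[of z0] a_less less_b by simp
  then show ?thesis using less_b by (simp add: zero_less_mult_iff)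
qed

lemma hitting_time_z0: "hitting_time z0 = 0"
  by (simp add: hitting_time_def)

lemma hitting_time_deriv:
  assumes "a < z" "z < b"
  shows "(hitting_time has_real_derivative 1 / G z) (at z)"
proof -
  define c where "c = (z + b) / 2"
  have "G w \<noteq> 0" if "w \<in> {a..c}" for w
    using pos[of w] that assms unfolding c_def by auto
  then have "continuous_on {a..c} (\<lambda>w. 1 / G w)"
    using assms unfolding c_def by (intro continuous_intros continuous_on_subset[OF cont]) auto
  then have "((\<lambda>x. integral {a..x} (\<lambda>w. 1 / G w)) has_real_derivative 1 / G z) (at z within {a..c})"
    by (rule integral_has_real_derivative) (use assms c_def in auto)
  moreover have "at z within {a..c} = at z"
    using assms unfolding c_def by (intro at_within_interior) auto
  ultimately have "((\<lambda>x. integral {a..x} (\<lambda>w. 1 / G w)) has_real_derivative 1 / G z) (at z)"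
    by simp
  then show ?thesis
    unfolding hitting_time_def using DERIV_diff[OF _ DERIV_const] by fastforce
qed

lemma hitting_time_strict_mono: "strict_mono_on {a<..<b} hitting_time"
proof (rule strict_mono_onI)
  fix x y assume xy: "x \<in> {a<..<b}" "y \<in> {a<..<b}" "x < y"
  show "hitting_time x < hitting_time y"
  proof (rule DERIV_pos_imp_increasing[OF \<open>x < y\<close>])
    fix w assume "x \<le> w" "w \<le> y"
    with xy have "a < w" "w < b" by auto
    then show "\<exists>d. (hitting_time has_real_derivative d) (at w) \<and> d > 0"
      using hitting_time_deriv pos by (intro exI[of _ "1 / G w"]) simp
  qed
qed

text \<open>The time needed to come within distance \<open>b - z\<close> of the barrier grows like
  \<open>- ln (b - z) / L\<close>, so the barrier is never reached.\<close>
lemma hitting_time_lower_bound: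
  assumes "z0 \<le> z" "z < b"
  shows "(ln (b - z0) - ln (b - z)) / L \<le> hitting_time z"
proof -
  define h where "h w = hitting_time w + ln (b - w) / L" for w
  have "h z0 \<le> h z"
  proof (rule DERIV_nonneg_imp_nondecreasing[OF \<open>z0 \<le> z\<close>])
    fix w assume w: "z0 \<le> w" "w \<le> z"
    then have "a < w" "w < b" using assms a_less by auto
    then have "(h has_real_derivative 1 / G w + (- 1 / (b - w)) / L) (at w)"
      unfolding h_def using L_pos by (auto intro!: derivative_eq_intros hitting_time_deriv)
    moreover have "1 / G w + (- 1 / (b - w)) / L = 1 / G w - 1 / (L * (b - w))"
      using L_pos by (simp add: field_simps)
    moreover have "1 / (L * (b - w)) \<le> 1 / G w"
      using linear_near_b pos \<open>w < b\<close> w a_less L_pos by (intro divide_left_mono) auto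
    ultimately show "\<exists>y. (h has_real_derivative y) (at w) \<and> y \<ge> 0"
      by (metis diff_ge_0_iff_ge)
  qed
  then show ?thesis unfolding h_def hitting_time_z0 by (simp add: diff_divide_distrib)
qed

lemma hitting_time_onto:
  assumes "t \<ge> 0"
  obtains z where "z0 \<le> z" "z < b" "hitting_time z = t"
proof -
  define zt where "zt = b - (b - z0) * exp (- L * t)"
  have "exp (- L * t) \<le> 1" using assms L_pos by simp
  then have "(b - z0) * exp (- L * t) \<le> b - z0" by (rule mult_left_le) (use less_b in auto)
  moreover have "0 < (b - z0) * exp (- L * t)" using less_b by simp
  ultimately have zt: "z0 \<le> zt" "zt < b" unfolding zt_def by linarith+
  have "ln (b - zt) = ln (b - z0) - L * t" unfolding zt_def using less_b by (simp add: ln_mult)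
  then have "t \<le> hitting_time zt" using hitting_time_lower_bound[OF zt] L_pos by simp
  moreover have "continuous_on {z0..zt} hitting_time"
    using zt a_less by (intro continuous_at_imp_continuous_on ballI DERIV_isCont[OF hitting_time_deriv]) auto
  ultimately obtain z where "z0 \<le> z" "z \<le> zt" "hitting_time z = t"
    using IVT'[of hitting_time z0 t zt] zt assms hitting_time_z0 by auto
  then show thesis using that zt by simp
qed

text \<open>The solution is the inverse of the hitting time.\<close>
theorem solution_exists:
  obtains Z where "Z 0 = z0" "\<And>t. t \<ge> 0 \<Longrightarrow> a < Z t \<and> Z t < b"
    "\<And>t. t \<ge> 0 \<Longrightarrow> (Z has_real_derivative G (Z t)) (at t)"
proof
  define Z where "Z = inv_into {a<..<b} hitting_time"
  have Z_inverse: "Z (hitting_time z) = z" if "a < z" "z < b" for z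
    unfolding Z_def using that strict_mono_on_imp_inj_on[OF hitting_time_strict_mono]
    by (auto intro: inv_into_f_f)
  show "Z 0 = z0" using Z_inverse[of z0] a_less less_b hitting_time_z0 by simp
  fix t :: real assume "t \<ge> 0"
  then obtain z where z: "a < z" "z < b" "hitting_time z = t"
    using hitting_time_onto a_less by (metis less_le_trans)
  then show "a < Z t \<and> Z t < b" using Z_inverse by auto
  have "G z \<noteq> 0" using pos z by (metis less_imp_le less_irrefl)
  then have "(Z has_derivative (*) (G z)) (at (hitting_time z))"
    using z Z_inverse hitting_time_deriv[of z]
    by (intro has_derivative_inverse_strong[of "{a<..<b}" z hitting_time Z "(*) (1 / G z)"])
       (auto intro!: continuous_at_imp_continuous_on DERIV_isCont hitting_time_deriv
             simp: has_field_derivative_def fun_eq_iff)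
  moreover have "Z t = z" using Z_inverse z by blast
  ultimately show "(Z has_real_derivative G (Z t)) (at t)"
    using z by (simp add: has_field_derivative_def)
qed

end

section \<open>Stability and output attractivity\<close>

lemma is_sol_equilibrium: "is_sol \<theta> k \<sigma> (\<lambda>_. 0) (\<lambda>_. c)"
  unfolding is_sol_def by (auto intro!: derivative_eq_intros)

lemma is_sol_z_mono:
  assumes "is_sol \<theta> k \<sigma> \<xi> z" "0 \<le> s" "s \<le> t"
  shows "z s \<le> z t"
proof (rule nondecreasing_if_deriv_nonneg_within_atLeast[where a = 0 and f = z and f' = "\<lambda>t. (\<xi> t)^2"])
  show "(z has_real_derivative (\<xi> u)^2) (at u within {0..})" if "0 \<le> u" for u
    using assms(1) that by (simp add: is_sol_def)
qed (use assms in auto)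

lemma is_sol_energy_antimono:
  assumes sol: "is_sol \<theta> k \<sigma> \<xi> z" and "\<sigma> \<ge> 0" "0 \<le> s" "s \<le> t"
  shows "norm (\<xi> t, z t + k) \<le> norm (\<xi> s, z s + k)"
proof -
  have "- ((\<xi> s)^2 + (z s + k)^2) \<le> - ((\<xi> t)^2 + (z t + k)^2)"
  proof (rule nondecreasing_if_deriv_nonneg_within_atLeast
      [where a = 0 and f = "\<lambda>u. - ((\<xi> u)^2 + (z u + k)^2)"])
    fix u :: real assume "0 \<le> u"
    then have "(\<xi> has_real_derivative - (z u + k + \<sigma> * (\<theta> + z u)^2) * \<xi> u) (at u within {0..})"
      "(z has_real_derivative (\<xi> u)^2) (at u within {0..})"
      using sol by (auto simp: is_sol_def)
    then have "((\<lambda>u. - ((\<xi> u)^2 + (z u + k)^2)) has_real_derivative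
        - (2 * \<xi> u * (- (z u + k + \<sigma> * (\<theta> + z u)^2) * \<xi> u) + 2 * (z u + k) * (\<xi> u)^2))
        (at u within {0..})"
      by (auto intro!: derivative_eq_intros)
    also have "- (2 * \<xi> u * (- (z u + k + \<sigma> * (\<theta> + z u)^2) * \<xi> u) + 2 * (z u + k) * (\<xi> u)^2)
        = 2 * \<sigma> * (\<theta> + z u)^2 * (\<xi> u)^2"
      by (simp add: algebra_simps power2_eq_square)
    finally show "((\<lambda>u. - ((\<xi> u)^2 + (z u + k)^2)) has_real_derivative
        2 * \<sigma> * (\<theta> + z u)^2 * (\<xi> u)^2) (at u within {0..})" .
  qed (use assms in auto)
  then show ?thesis by (simp add: norm_Pair)
qed

lemma lagrange_stable:
  assumes "\<sigma> \<ge> 0"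
  shows "lagrange_stable \<theta> k \<sigma>"
  unfolding lagrange_stable_def
proof (intro allI impI exI[of _ "r + 2 * \<bar>k\<bar>" for r])
  fix r \<xi> z and t :: real
  assume sol: "is_sol \<theta> k \<sigma> \<xi> z" and "norm (\<xi> 0, z 0) \<le> r" and "0 \<le> t"
  have "norm (\<xi> t, z t) \<le> norm (\<xi> t, z t + k) + \<bar>k\<bar>"
    using norm_Pair_shift_snd[of "\<xi> t" "z t + k" "- k"] by simp
  also have "\<dots> \<le> norm (\<xi> 0, z 0 + k) + \<bar>k\<bar>"
    using is_sol_energy_antimono[OF sol assms] \<open>0 \<le> t\<close> by simp
  also have "\<dots> \<le> r + 2 * \<bar>k\<bar>"
    using norm_Pair_shift_snd[of "\<xi> 0" "z 0" k] \<open>norm (\<xi> 0, z 0) \<le> r\<close> by simp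
  finally show "norm (\<xi> t, z t) \<le> r + 2 * \<bar>k\<bar>" .
qed

text \<open>Since \<open>z\<close> increases from \<open>z 0 \<ge> -k\<close>, the growth of \<open>(z + k)\<^sup>2\<close> must be paid for by \<open>\<xi>\<close>.\<close>
lemma is_sol_displacement_bound:
  assumes sol: "is_sol \<theta> k \<sigma> \<xi> z" and "\<sigma> \<ge> 0" "z 0 + k \<ge> 0" "t \<ge> 0"
  shows "norm (\<xi> t, z t - z 0) \<le> \<bar>\<xi> 0\<bar>"
proof -
  have energy: "(\<xi> t)^2 + (z t + k)^2 \<le> (\<xi> 0)^2 + (z 0 + k)^2"
    using is_sol_energy_antimono[OF sol \<open>\<sigma> \<ge> 0\<close>, of 0 t] \<open>t \<ge> 0\<close> by (simp add: norm_Pair)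
  have "z 0 \<le> z t" using is_sol_z_mono[OF sol] \<open>t \<ge> 0\<close> by simp
  then have "(z t - z 0)^2 \<le> (z t - z 0) * (z t + z 0 + 2 * k)"
    using \<open>z 0 + k \<ge> 0\<close> unfolding power2_eq_square by (intro mult_left_mono) auto
  also have "\<dots> = (z t + k)^2 - (z 0 + k)^2" by (simp add: algebra_simps power2_eq_square)
  finally have "(\<xi> t)^2 + (z t - z 0)^2 \<le> (\<xi> 0)^2" using energy by simp
  then have "sqrt ((\<xi> t)^2 + (z t - z 0)^2) \<le> sqrt ((\<xi> 0)^2)" by (rule real_sqrt_le_mono)
  then show ?thesis by (simp add: norm_Pair)
qed

lemma lyapunov_stable:
  assumes "k > 0" "\<sigma> \<ge> 0"
  shows "lyapunov_stable \<theta> k \<sigma>"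
  unfolding lyapunov_stable_def
proof (intro allI impI exI[of _ "min k (\<epsilon> / 2)" for \<epsilon>] conjI)
  fix \<epsilon> :: real assume "\<epsilon> > 0"
  then show "min k (\<epsilon> / 2) > 0" using assms by simp
  fix \<xi> z and t :: real
  assume sol: "is_sol \<theta> k \<sigma> \<xi> z" and small: "norm (\<xi> 0, z 0) \<le> min k (\<epsilon> / 2)" and "0 \<le> t"
  have "\<bar>\<xi> 0\<bar> \<le> min k (\<epsilon> / 2)" "\<bar>z 0\<bar> \<le> min k (\<epsilon> / 2)"
    using small norm_fst_le[of "\<xi> 0" "z 0"] norm_snd_le[of "z 0" "\<xi> 0"] by auto
  have "norm (\<xi> t, z t) \<le> norm (\<xi> t, z t - z 0) + \<bar>z 0\<bar>"
    using norm_Pair_shift_snd[of "\<xi> t" "z t - z 0" "z 0"] by simp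
  also have "\<dots> \<le> \<bar>\<xi> 0\<bar> + \<bar>z 0\<bar>"
    using is_sol_displacement_bound[OF sol \<open>\<sigma> \<ge> 0\<close> _ \<open>0 \<le> t\<close>] \<open>\<bar>z 0\<bar> \<le> min k (\<epsilon> / 2)\<close>
    by force
  also have "\<dots> \<le> \<epsilon>" using \<open>\<bar>\<xi> 0\<bar> \<le> min k (\<epsilon> / 2)\<close> \<open>\<bar>z 0\<bar> \<le> min k (\<epsilon> / 2)\<close> by simp
  finally show "norm (\<xi> t, z t) \<le> \<epsilon>" .
qed

lemma is_sol_output_tendsto_zero:
  assumes sol: "is_sol \<theta> k \<sigma> \<xi> z" and "\<sigma> \<ge> 0"
  shows "(\<xi> \<longlongrightarrow> 0) at_top"
proof -
  define E where "E t = norm (\<xi> t, z t + k)" for t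
  have E_antimono: "E t \<le> E s" if "0 \<le> s" "s \<le> t" for s t
    unfolding E_def using is_sol_energy_antimono[OF sol \<open>\<sigma> \<ge> 0\<close> that] .
  have z_bounded: "z t \<le> E 0 - k" if "0 \<le> t" for t
    using norm_snd_le[of "z t + k" "\<xi> t"] E_antimono[of 0 t] that unfolding E_def by simp
  obtain lz where lz: "(z \<longlongrightarrow> lz) at_top"
    using convergent_at_top_if_mono_bounded[of 0 z] is_sol_z_mono[OF sol] z_bounded by blast
  obtain lE where lE: "((\<lambda>t. - E t) \<longlongrightarrow> lE) at_top"
    using convergent_at_top_if_mono_bounded[of 0 "\<lambda>t. - E t" 0] E_antimono
    unfolding E_def by fastforce
  have "(\<xi> t)^2 = (- E t)^2 - (z t + k)^2" for t unfolding E_def by (simp add: norm_Pair)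
  then have lim: "((\<lambda>t. (\<xi> t)^2) \<longlongrightarrow> lE^2 - (lz + k)^2) at_top"
    by (simp only:) (intro tendsto_intros lE lz)
  have "lE^2 - (lz + k)^2 \<le> 0"
    using sol z_bounded lim unfolding is_sol_def
    by (intro tendsto_derivative_nonpos_if_bounded_above[where a = 0 and f = z]) auto
  moreover have "lE^2 - (lz + k)^2 \<ge> 0" by (rule tendsto_lowerbound[OF lim]) auto
  ultimately have "((\<lambda>t. (\<xi> t)^2) \<longlongrightarrow> 0) at_top" using lim by simp
  then have "((\<lambda>t. sqrt ((\<xi> t)^2)) \<longlongrightarrow> sqrt 0) at_top" by (rule tendsto_real_sqrt)
  then show ?thesis by (simp add: tendsto_rabs_zero_iff)
qed

lemma GAOS:
  assumes "k > 0" "\<sigma> \<ge> 0"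
  shows "GAOS \<theta> k \<sigma>"
proof -
  have output_le: "\<bar>\<xi> t\<bar> \<le> norm (\<xi> t, z t)" for \<xi> z :: "real \<Rightarrow> real" and t
    using norm_fst_le[of "\<xi> t" "z t"] by simp
  have "\<exists>\<delta>>0. \<forall>\<xi> z. is_sol \<theta> k \<sigma> \<xi> z \<longrightarrow> norm (\<xi> 0, z 0) \<le> \<delta> \<longrightarrow> (\<forall>t\<ge>0. \<bar>\<xi> t\<bar> \<le> \<epsilon>)"
    if \<epsilon>: "\<epsilon> > 0" for \<epsilon>
  proof -
    obtain \<delta> where "\<delta> > 0" and \<delta>: "\<forall>\<xi> z. is_sol \<theta> k \<sigma> \<xi> z \<longrightarrow> norm (\<xi> 0, z 0) \<le> \<delta> \<longrightarrow>
        (\<forall>t\<ge>0. norm (\<xi> t, z t) \<le> \<epsilon>)"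
      using lyapunov_stable[OF assms, of \<theta>] \<epsilon> unfolding lyapunov_stable_def by blast
    then show ?thesis using output_le order_trans by blast
  qed
  moreover have "\<exists>R. \<forall>\<xi> z. is_sol \<theta> k \<sigma> \<xi> z \<longrightarrow> norm (\<xi> 0, z 0) \<le> r \<longrightarrow> (\<forall>t\<ge>0. \<bar>\<xi> t\<bar> \<le> R)"
    if r: "r \<ge> 0" for r
  proof -
    obtain R where R: "\<forall>\<xi> z. is_sol \<theta> k \<sigma> \<xi> z \<longrightarrow> norm (\<xi> 0, z 0) \<le> r \<longrightarrow>
        (\<forall>t\<ge>0. norm (\<xi> t, z t) \<le> R)"
      using lagrange_stable[OF assms(2), of \<theta> k] r unfolding lagrange_stable_def by blast
    then show ?thesis using output_le order_trans by blast
  qed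
  ultimately show ?thesis
    unfolding GAOS_def using is_sol_output_tendsto_zero[OF _ assms(2)] by blast
qed

section \<open>Failure of uniform attractivity\<close>

lemma is_sol_sech_pulse: "is_sol \<theta> k 0 (\<lambda>t. inverse (cosh (t - T))) (\<lambda>t. tanh (t - T) - k)"
  unfolding is_sol_def
proof (intro allI impI conjI; rule has_field_derivative_at_within)
  fix t :: real
  show "((\<lambda>t. inverse (cosh (t - T))) has_real_derivative
      - (tanh (t - T) - k + k + 0 * (\<theta> + (tanh (t - T) - k))^2) * inverse (cosh (t - T))) (at t)"
    by (auto intro!: derivative_eq_intros simp: tanh_def field_simps power2_eq_square)
  show "((\<lambda>t. tanh (t - T) - k) has_real_derivative (inverse (cosh (t - T)))^2) (at t)"
    by (auto intro!: derivative_eq_intros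
        simp: tanh_def field_simps power2_eq_square cosh_square_eq[unfolded power2_eq_square])
qed

lemma not_uniformly_output_attractive:
  assumes "k \<ge> 0"
  shows "\<not> (\<exists>T>0. \<forall>\<xi> z. is_sol \<theta> k 0 \<xi> z \<longrightarrow>
          norm (\<xi> 0, z 0) \<le> sqrt (1 + (k + 1)^2) \<longrightarrow> (\<forall>t\<ge>T. \<bar>\<xi> t\<bar> \<le> 1/2))"
proof
  assume "\<exists>T>0. \<forall>\<xi> z. is_sol \<theta> k 0 \<xi> z \<longrightarrow>
          norm (\<xi> 0, z 0) \<le> sqrt (1 + (k + 1)^2) \<longrightarrow> (\<forall>t\<ge>T. \<bar>\<xi> t\<bar> \<le> 1/2)"
  then obtain T :: real where "T > 0" and uniform: "\<And>\<xi> z. is_sol \<theta> k 0 \<xi> z \<Longrightarrow>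
          norm (\<xi> 0, z 0) \<le> sqrt (1 + (k + 1)^2) \<Longrightarrow> \<bar>\<xi> T\<bar> \<le> 1/2" by auto
  have "0 < inverse (cosh (- T))" "inverse (cosh (- T)) \<le> 1"
    using cosh_real_ge_1[of "- T"] by (auto simp: field_simps)
  then have "(inverse (cosh (0 - T)))^2 \<le> 1" by (simp add: power_le_one)
  moreover have "\<bar>tanh (0 - T) - k\<bar> \<le> k + 1"
    using tanh_real_lt_1[of "0 - T"] tanh_real_gt_neg1[of "0 - T"] assms by linarith
  then have "(tanh (0 - T) - k)^2 \<le> (k + 1)^2" using power_mono[of _ _ 2] by fastforce
  ultimately have "norm (inverse (cosh (0 - T)), tanh (0 - T) - k) \<le> sqrt (1 + (k + 1)^2)"
    unfolding norm_Pair real_norm_def power2_abs by (intro real_sqrt_le_mono) linarith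
  then have "\<bar>inverse (cosh (T - T))\<bar> \<le> 1/2"
    using uniform[OF is_sol_sech_pulse] by fast
  then show False by simp
qed

section \<open>Forward completeness\<close>

definition orbit_potential :: "real \<Rightarrow> real \<Rightarrow> real \<Rightarrow> real \<Rightarrow> real" where
  "orbit_potential \<theta> k \<sigma> z = (z + k)^2 + 2 * \<sigma> / 3 * (\<theta> + z)^3"

lemma orbit_potential_deriv:
  "(orbit_potential \<theta> k \<sigma> has_real_derivative 2 * (z + k + \<sigma> * (\<theta> + z)^2)) (at z)"
  unfolding orbit_potential_def
  by (auto intro!: derivative_eq_intros simp: power2_eq_square algebra_simps)

lemma is_sol_of_first_integral:
  assumes der: "\<And>t. t \<ge> 0 \<Longrightarrow> (Z has_real_derivative C - orbit_potential \<theta> k \<sigma> (Z t)) (at t)"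
    and pos: "\<And>t. t \<ge> 0 \<Longrightarrow> C - orbit_potential \<theta> k \<sigma> (Z t) > 0"
    and "\<bar>s\<bar> = 1"
  shows "is_sol \<theta> k \<sigma> (\<lambda>t. s * sqrt (C - orbit_potential \<theta> k \<sigma> (Z t))) Z"
  unfolding is_sol_def
proof (intro allI impI conjI; rule has_field_derivative_at_within)
  fix t :: real assume "t \<ge> 0"
  let ?G = "C - orbit_potential \<theta> k \<sigma> (Z t)"
  define q where "q = Z t + k + \<sigma> * (\<theta> + Z t)^2"
  have "?G > 0" using pos[OF \<open>t \<ge> 0\<close>] .
  have "((\<lambda>t. C - orbit_potential \<theta> k \<sigma> (Z t)) has_real_derivative - (2 * q) * ?G) (at t)"
    using DERIV_diff[OF DERIV_const[of C] DERIV_chain2[OF orbit_potential_deriv[of \<theta> k \<sigma>] der[OF \<open>t \<ge> 0\<close>]]]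
    unfolding q_def by (simp add: algebra_simps)
  from DERIV_cmult[OF DERIV_chain2[OF DERIV_real_sqrt[OF \<open>?G > 0\<close>] this], of s]
  have "((\<lambda>t. s * sqrt (C - orbit_potential \<theta> k \<sigma> (Z t))) has_real_derivative
      s * (inverse (sqrt ?G) / 2 * (- (2 * q) * ?G))) (at t)" .
  also have "s * (inverse (sqrt ?G) / 2 * (- (2 * q) * ?G)) = - q * (s * sqrt ?G)"
  proof -
    have "sqrt ?G * sqrt ?G = ?G" using \<open>?G > 0\<close> by simp
    then show ?thesis using \<open>?G > 0\<close> by (simp add: field_simps)
  qed
  finally show "((\<lambda>t. s * sqrt (C - orbit_potential \<theta> k \<sigma> (Z t))) has_real_derivative
      - (Z t + k + \<sigma> * (\<theta> + Z t)^2) * (s * sqrt (C - orbit_potential \<theta> k \<sigma> (Z t)))) (at t)"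
    unfolding q_def .
  have "(s * sqrt ?G)^2 = ?G" using \<open>?G > 0\<close> \<open>\<bar>s\<bar> = 1\<close> by (simp add: power_mult_distrib abs_square_eq_1)
  then show "(Z has_real_derivative (s * sqrt (C - orbit_potential \<theta> k \<sigma> (Z t)))^2) (at t)"
    using der[OF \<open>t \<ge> 0\<close>] by simp
qed

lemma orbit_potential_exceeds:
  assumes "\<sigma> \<ge> 0"
  obtains z1 where "z0 < z1" "c^2 + orbit_potential \<theta> k \<sigma> z0 \<le> orbit_potential \<theta> k \<sigma> z1"
proof
  define z1 where "z1 = \<bar>c\<bar> + \<bar>z0\<bar> + 2 * \<bar>k\<bar> + 1"
  show "z0 < z1" unfolding z1_def by linarith
  have "(\<theta> + z0)^3 \<le> (\<theta> + z1)^3" using \<open>z0 < z1\<close> by (intro power_mono_odd) auto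
  then have cubic: "2 * \<sigma> / 3 * (\<theta> + z0)^3 \<le> 2 * \<sigma> / 3 * (\<theta> + z1)^3"
    using assms by (intro mult_left_mono) auto
  have "c^2 + (z0 + k)^2 \<le> (\<bar>c\<bar> + \<bar>z0 + k\<bar>)^2" by (simp add: power2_eq_square algebra_simps)
  also have "\<dots> \<le> (z1 + k)^2" unfolding z1_def by (intro power_mono) auto
  finally show "c^2 + orbit_potential \<theta> k \<sigma> z0 \<le> orbit_potential \<theta> k \<sigma> z1"
    using cubic unfolding orbit_potential_def by linarith
qed

lemma exists_sol_nonzero_output:
  assumes "\<sigma> \<ge> 0" "\<xi>0 \<noteq> 0"
  shows "\<exists>\<xi> z. is_sol \<theta> k \<sigma> \<xi> z \<and> \<xi> 0 = \<xi>0 \<and> z 0 = z0"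
proof -
  define C where "C = \<xi>0^2 + orbit_potential \<theta> k \<sigma> z0"
  define G where "G z = C - orbit_potential \<theta> k \<sigma> z" for z
  have G_deriv: "(G has_real_derivative - (2 * (z + k + \<sigma> * (\<theta> + z)^2))) (at z)" for z
    unfolding G_def by (auto intro!: derivative_eq_intros orbit_potential_deriv)
  have G_cont: "continuous_on S G" for S
    using G_deriv by (intro continuous_at_imp_continuous_on ballI DERIV_isCont) auto
  have "G z0 > 0" using assms by (simp add: G_def C_def)
  obtain z1 where "z0 < z1" "G z1 \<le> 0"
    using orbit_potential_exceeds[OF \<open>\<sigma> \<ge> 0\<close>] unfolding G_def C_def by (metis diff_le_0_iff_le)
  then obtain b where b: "z0 < b" "G b \<le> 0" and G_pos_right: "\<And>z. z0 \<le> z \<Longrightarrow> z < b \<Longrightarrow> G z > 0"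
    using first_nonpositive_point[OF G_cont \<open>G z0 > 0\<close>] by (metis less_imp_le)
  obtain a where "a < z0" and G_pos_left: "\<And>z. a \<le> z \<Longrightarrow> z \<le> z0 \<Longrightarrow> G z > 0"
    using positive_on_left_neighbourhood G_deriv DERIV_isCont \<open>G z0 > 0\<close> by metis
  have "continuous_on {z0..b} (\<lambda>z. - (2 * (z + k + \<sigma> * (\<theta> + z)^2)))"
    by (intro continuous_intros)
  then obtain B where B: "\<And>x y. x \<in> {z0..b} \<Longrightarrow> y \<in> {z0..b} \<Longrightarrow> \<bar>G x - G y\<bar> \<le> B * \<bar>x - y\<bar>"
    using lipschitz_if_continuous_derivative[OF G_deriv] by blast
  interpret scalar_ode_below_barrier G a z0 b B
  proof
    show "G z > 0" if "a \<le> z" "z < b" for z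
      using G_pos_left G_pos_right that by (cases "z \<le> z0") auto
    show "G z \<le> B * (b - z)" if "z0 \<le> z" "z < b" for z
      using B[of z b] b that by auto
  qed (use \<open>a < z0\<close> \<open>z0 < b\<close> G_cont in auto)
  obtain Z where "Z 0 = z0" and Z: "\<And>t. t \<ge> 0 \<Longrightarrow> a < Z t \<and> Z t < b"
    "\<And>t. t \<ge> 0 \<Longrightarrow> (Z has_real_derivative G (Z t)) (at t)"
    using solution_exists by blast
  have "G (Z t) > 0" if "t \<ge> 0" for t
    using pos Z(1)[OF that] by (simp add: less_imp_le)
  then have "is_sol \<theta> k \<sigma> (\<lambda>t. sgn \<xi>0 * sqrt (G (Z t))) Z"
    using Z(2) \<open>\<xi>0 \<noteq> 0\<close> unfolding G_def
    by (intro is_sol_of_first_integral) (auto simp: abs_sgn_eq)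
  moreover have "sgn \<xi>0 * sqrt (G (Z 0)) = \<xi>0"
    using \<open>Z 0 = z0\<close> by (simp add: G_def C_def sgn_mult_abs)
  ultimately show ?thesis using \<open>Z 0 = z0\<close> by blast
qed

lemma forward_complete:
  assumes "\<sigma> \<ge> 0"
  shows "forward_complete \<theta> k \<sigma>"
  unfolding forward_complete_def
proof (intro allI)
  fix \<xi>0 z0 :: real
  show "\<exists>\<xi> z. is_sol \<theta> k \<sigma> \<xi> z \<and> \<xi> 0 = \<xi>0 \<and> z 0 = z0"
  proof (cases "\<xi>0 = 0")
    case True
    then show ?thesis using is_sol_equilibrium by blast
  next
    case False
    then show ?thesis using exists_sol_nonzero_output[OF assms] by blast
  qed
qed

theorem mainTheorem8:
  fixes \<theta> k \<sigma> :: real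
  assumes "k > 0" and "\<sigma> \<ge> 0"
  shows "forward_complete \<theta> k \<sigma> \<and> lagrange_stable \<theta> k \<sigma> \<and> lyapunov_stable \<theta> k \<sigma>
    \<and> (\<forall>z. is_equilibrium \<theta> k \<sigma> (0, z)) \<and> GAOS \<theta> k \<sigma>
    \<and> (\<sigma> = 0 \<longrightarrow> \<not> (\<exists>T>0. \<forall>\<xi> z. is_sol \<theta> k \<sigma> \<xi> z \<longrightarrow>
          norm (\<xi> 0, z 0) \<le> sqrt (1 + (k + 1)^2) \<longrightarrow> (\<forall>t\<ge>T. \<bar>\<xi> t\<bar> \<le> 1/2)))"
  using forward_complete[OF assms(2)] lagrange_stable[OF assms(2)] lyapunov_stable[OF assms]
    is_sol_equilibrium GAOS[OF assms] not_uniformly_output_attractive[of k \<theta>] assms(1)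
  unfolding is_equilibrium_def by auto

end
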